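(* Let $A$ be a finite set, $n\in\mathbb N$, $\mu\in\Pr(A^n)$ and $r>0$. Then there exists $S\subseteq[n]$ with $|S|\ge(1-r)n$ such that $\mathrm{DTC}(\mu_S)\le r^{-1}\mathrm{TC}(\mu)$.
   Context: $[n]=\{1,\dots,n\}$; $\mu_S$ is the projection (marginal) of $\mu$ on $A^S$. For a tuple $\xi=(\xi_i)_{i\in I}$ of random variables with joint law $\nu$, $\mathrm{TC}(\nu)=\sum_{i\in I}\mathrm H(\xi_i)-\mathrm H(\xi)$ (total correlation) and $\mathrm{DTC}(\nu)=\mathrm H(\xi)-\sum_{i\in I}\mathrm H(\xi_i\,|\,\xi_{I\setminus\{i\}})$ (dual total correlation), with Shannon entropy. *)

theory Defs
  imports "HOL-Probability.Probability_Mass_Function"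
begin

definition entropy :: "'b pmf \<Rightarrow> real" where
  "entropy p = - (\<Sum>x\<in>set_pmf p. pmf p x * log 2 (pmf p x))"

definition cond_entropy :: "'c pmf \<Rightarrow> ('c \<Rightarrow> 'd) \<Rightarrow> ('c \<Rightarrow> 'e) \<Rightarrow> real" where
  "cond_entropy p X Y =
     (\<Sum>y\<in>Y ` set_pmf p. pmf (map_pmf Y p) y * entropy (map_pmf X (cond_pmf p {z. Y z = y})))"

definition marginal :: "nat set \<Rightarrow> (nat \<Rightarrow> 'a) pmf \<Rightarrow> (nat \<Rightarrow> 'a) pmf" where
  "marginal S \<nu> = map_pmf (\<lambda>x. restrict x S) \<nu>"

definition TC :: "nat set \<Rightarrow> (nat \<Rightarrow> 'a) pmf \<Rightarrow> real" where
  "TC I \<nu> = (\<Sum>i\<in>I. entropy (map_pmf (\<lambda>x. x i) \<nu>)) - entropy (map_pmf (\<lambda>x. restrict x I) \<nu>)"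

definition DTC :: "nat set \<Rightarrow> (nat \<Rightarrow> 'a) pmf \<Rightarrow> real" where
  "DTC I \<nu> = entropy (map_pmf (\<lambda>x. restrict x I) \<nu>)
     - (\<Sum>i\<in>I. cond_entropy \<nu> (\<lambda>x. x i) (\<lambda>x. restrict x (I - {i})))"

end

theory Submission
  imports Defs
begin

text \<open>For a set S of coordinates, the decrement TC S - TC (S - {i}) equals
  H(x_i) - H(x_i | x_(S - {i})), and summing it over i \<in> S gives TC + DTC of the
  marginal on S; as TC \<ge> 0 by subadditivity of entropy, DTC is at most the sum of the decrements.
  Now delete, one at a time, coordinates whose decrement exceeds c = TC(\<mu>) / (r n). Each deletion
  lowers the nonnegative quantity TC by more than c, so at most r n coordinates are deleted, and on
  the remaining set S every decrement is at most c, whence DTC(\<mu>_S) \<le> n c = TC(\<mu>) / r.\<close>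

lemma entropy_eq_sum_superset:
  assumes "finite B" "set_pmf q \<subseteq> B"
  shows "entropy q = - (\<Sum>y\<in>B. pmf q y * log 2 (pmf q y))"
  unfolding entropy_def
  by (rule arg_cong[where f=uminus], rule sum.mono_neutral_left)
     (use assms in \<open>auto simp: set_pmf_eq\<close>)

lemma entropy_map_pmf_inj:
  assumes "inj_on f (set_pmf q)"
  shows "entropy (map_pmf f q) = entropy q"
  unfolding entropy_def set_map_pmf
  by (subst sum.reindex[OF assms]) (simp add: pmf_map_inj[OF assms])

lemma pmf_map_pmf_eq_sum:
  assumes "finite F" "set_pmf q \<subseteq> F"
  shows "pmf (map_pmf f q) y = (\<Sum>z\<in>{z\<in>F. f z = y}. pmf q z)"
proof -
  have "pmf (map_pmf f q) y = measure q (f -` {y} \<inter> set_pmf q)"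
    by (simp add: pmf_map measure_Int_set_pmf)
  also have "f -` {y} \<inter> set_pmf q = {z\<in>F. f z = y} \<inter> set_pmf q"
    using assms(2) by auto
  also have "measure q \<dots> = (\<Sum>z\<in>{z\<in>F. f z = y}. pmf q z)"
    using assms(1) by (simp add: measure_Int_set_pmf measure_measure_pmf_finite)
  finally show ?thesis .
qed

lemma pmf_map_fst_eq_sum:
  assumes "finite B" "set_pmf J \<subseteq> A \<times> B"
  shows "pmf (map_pmf fst J) x = (\<Sum>y\<in>B. pmf J (x, y))"
proof -
  have "pmf (map_pmf fst J) x = measure J (fst -` {x} \<inter> set_pmf J)"
    by (simp add: pmf_map measure_Int_set_pmf)
  also have "fst -` {x} \<inter> set_pmf J = Pair x ` B \<inter> set_pmf J"
    using assms(2) by auto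
  also have "measure J \<dots> = (\<Sum>y\<in>B. pmf J (x, y))"
    using assms(1)
    by (simp add: measure_Int_set_pmf measure_measure_pmf_finite sum.reindex inj_on_def)
  finally show ?thesis .
qed

lemma pmf_map_snd_eq_sum:
  assumes "finite A" "set_pmf J \<subseteq> A \<times> B"
  shows "pmf (map_pmf snd J) y = (\<Sum>x\<in>A. pmf J (x, y))"
proof -
  have "pmf (map_pmf snd J) y = measure J (snd -` {y} \<inter> set_pmf J)"
    by (simp add: pmf_map measure_Int_set_pmf)
  also have "snd -` {y} \<inter> set_pmf J = (\<lambda>x. (x, y)) ` A \<inter> set_pmf J"
    using assms(2) by auto
  also have "measure J \<dots> = (\<Sum>x\<in>A. pmf J (x, y))"
    using assms(1)
    by (simp add: measure_Int_set_pmf measure_measure_pmf_finite sum.reindex inj_on_def)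
  finally show ?thesis .
qed

lemma gibbs_inequality:
  fixes a b :: "'b \<Rightarrow> real"
  assumes "finite B" "\<And>z. z \<in> B \<Longrightarrow> a z \<ge> 0" "\<And>z. z \<in> B \<Longrightarrow> b z \<ge> 0"
    and "\<And>z. z \<in> B \<Longrightarrow> a z > 0 \<Longrightarrow> b z > 0" and "sum b B \<le> sum a B"
  shows "(\<Sum>z\<in>B. a z * log 2 (b z)) \<le> (\<Sum>z\<in>B. a z * log 2 (a z))"
proof -
  have termwise: "a z * log 2 (b z) - a z * log 2 (a z) \<le> (b z - a z) / ln 2" if "z \<in> B" for z
  proof (cases "a z > 0")
    case True
    then have "b z > 0" using assms(4) that by blast
    then have "a z * log 2 (b z) - a z * log 2 (a z) = a z * (ln (b z / a z) / ln 2)"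
      using True by (simp add: log_def ln_div field_simps)
    also have "\<dots> \<le> a z * ((b z / a z - 1) / ln 2)"
      using True \<open>b z > 0\<close> by (intro mult_left_mono divide_right_mono ln_le_minus_one) auto
    also have "\<dots> = (b z - a z) / ln 2" using True by (simp add: field_simps)
    finally show ?thesis .
  next
    case False
    then have "a z = 0" using assms(2) that by force
    then show ?thesis using assms(3) that by simp
  qed
  have "(\<Sum>z\<in>B. a z * log 2 (b z)) - (\<Sum>z\<in>B. a z * log 2 (a z))
      \<le> (\<Sum>z\<in>B. (b z - a z) / ln 2)"
    unfolding sum_subtractf[symmetric] by (rule sum_mono[OF termwise])
  also have "\<dots> = (sum b B - sum a B) / ln 2"
    by (simp add: sum_divide_distrib[symmetric] sum_subtractf)
  also have "\<dots> \<le> 0" using assms(5) by (simp add: divide_nonpos_pos)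
  finally show ?thesis by simp
qed

lemma entropy_le_entropy_fst_plus_snd:
  assumes "finite (set_pmf J)"
  shows "entropy J \<le> entropy (map_pmf fst J) + entropy (map_pmf snd J)"
proof -
  define A where "A = fst ` set_pmf J"
  define B where "B = snd ` set_pmf J"
  define P where "P = map_pmf fst J"
  define Q where "Q = map_pmf snd J"
  have fin: "finite A" "finite B" "finite (A \<times> B)"
    using assms by (simp_all add: A_def B_def)
  have J_sub: "set_pmf J \<subseteq> A \<times> B"
    unfolding A_def B_def by (auto intro: rev_image_eqI)
  have P: "pmf P x = (\<Sum>y\<in>B. pmf J (x, y))" for x
    unfolding P_def using fin(2) J_sub by (rule pmf_map_fst_eq_sum)
  have Q: "pmf Q y = (\<Sum>x\<in>A. pmf J (x, y))" for y
    unfolding Q_def using fin(1) J_sub by (rule pmf_map_snd_eq_sum)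
  have PQ_pos: "pmf P x > 0" "pmf Q y > 0" if "pmf J (x, y) > 0" for x y
  proof -
    have "(x, y) \<in> set_pmf J" using that by (simp add: set_pmf_iff)
    then show "pmf P x > 0" "pmf Q y > 0"
      unfolding P_def Q_def by (auto intro!: pmf_positive rev_image_eqI)
  qed
  have "(\<Sum>(x, y)\<in>A \<times> B. pmf P x * pmf Q y) = (\<Sum>x\<in>A. pmf P x) * (\<Sum>y\<in>B. pmf Q y)"
    by (simp add: sum.cartesian_product[symmetric] sum_product)
  also have "\<dots> = 1"
    using fin by (simp add: P_def Q_def A_def B_def sum_pmf_eq_1)
  finally have product_total: "(\<Sum>(x, y)\<in>A \<times> B. pmf P x * pmf Q y) = 1" .
  have "(\<Sum>(x, y)\<in>A \<times> B. pmf J (x, y) * log 2 (pmf P x * pmf Q y))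
      \<le> (\<Sum>(x, y)\<in>A \<times> B. pmf J (x, y) * log 2 (pmf J (x, y)))"
    using gibbs_inequality[OF fin(3), of "\<lambda>(x, y). pmf J (x, y)" "\<lambda>(x, y). pmf P x * pmf Q y"]
      PQ_pos product_total sum_pmf_eq_1[OF fin(3) J_sub]
    by (auto simp: split_beta)
  also have "\<dots> = - entropy J"
    using entropy_eq_sum_superset[OF fin(3) J_sub] by (simp add: split_beta)
  finally have gibbs: "(\<Sum>(x, y)\<in>A \<times> B. pmf J (x, y) * log 2 (pmf P x * pmf Q y)) \<le> - entropy J" .
  have log_split: "pmf J (x, y) * log 2 (pmf P x * pmf Q y)
      = pmf J (x, y) * log 2 (pmf P x) + pmf J (x, y) * log 2 (pmf Q y)" for x y
    using PQ_pos[of x y] pmf_nonneg[of J "(x, y)"]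
    by (cases "pmf J (x, y) = 0") (auto simp: log_mult distrib_left)
  have "(\<Sum>(x, y)\<in>A \<times> B. pmf J (x, y) * log 2 (pmf P x * pmf Q y))
      = (\<Sum>x\<in>A. \<Sum>y\<in>B. pmf J (x, y) * log 2 (pmf P x))
        + (\<Sum>y\<in>B. \<Sum>x\<in>A. pmf J (x, y) * log 2 (pmf Q y))"
    unfolding sum.cartesian_product[symmetric] log_split sum.distrib by (subst (2) sum.swap) simp
  also have "\<dots> = (\<Sum>x\<in>A. pmf P x * log 2 (pmf P x)) + (\<Sum>y\<in>B. pmf Q y * log 2 (pmf Q y))"
    by (simp add: P Q sum_distrib_right)
  also have "\<dots> = - entropy P - entropy Q"
    by (simp add: entropy_def P_def Q_def A_def B_def)
  finally show ?thesis using gibbs unfolding P_def Q_def by simp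
qed

lemma pmf_map_cond_pmf:
  assumes fin: "finite (set_pmf p)" and y: "y \<in> Y ` set_pmf p"
  shows "pmf (map_pmf X (cond_pmf p {z. Y z = y})) x
       = pmf (map_pmf (\<lambda>z. (X z, Y z)) p) (x, y) / pmf (map_pmf Y p) y"
proof -
  let ?F = "set_pmf p"
  have ne: "set_pmf p \<inter> {z. Y z = y} \<noteq> {}" using y by auto
  have Y_prob: "measure p {z. Y z = y} = pmf (map_pmf Y p) y"
    by (simp add: pmf_map vimage_def)
  have "pmf (map_pmf X (cond_pmf p {z. Y z = y})) x
      = (\<Sum>z\<in>{z\<in>?F. X z = x}. pmf (cond_pmf p {z. Y z = y}) z)"
    using ne by (intro pmf_map_pmf_eq_sum[OF fin]) auto
  also have "\<dots> = (\<Sum>z\<in>{z\<in>?F. X z = x}. if Y z = y then pmf p z / pmf (map_pmf Y p) y else 0)"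
    unfolding Y_prob[symmetric] using ne by (simp add: pmf_cond)
  also have "\<dots> = (\<Sum>z\<in>{z\<in>?F. (X z, Y z) = (x, y)}. pmf p z) / pmf (map_pmf Y p) y"
    using fin by (simp add: sum.inter_filter[symmetric] sum_divide_distrib conj_ac)
  also have "\<dots> = pmf (map_pmf (\<lambda>z. (X z, Y z)) p) (x, y) / pmf (map_pmf Y p) y"
    by (simp add: pmf_map_pmf_eq_sum[OF fin order_refl])
  finally show ?thesis .
qed

lemma cond_entropy_chain_rule:
  assumes fin: "finite (set_pmf p)"
  shows "cond_entropy p X Y = entropy (map_pmf (\<lambda>z. (X z, Y z)) p) - entropy (map_pmf Y p)"
proof -
  define A where "A = X ` set_pmf p"
  define B where "B = Y ` set_pmf p"
  define J where "J = map_pmf (\<lambda>z. (X z, Y z)) p"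
  define Q where "Q = map_pmf Y p"
  have finA: "finite A" and finAB: "finite (A \<times> B)"
    using fin by (simp_all add: A_def B_def)
  have J_sub: "set_pmf J \<subseteq> A \<times> B"
    unfolding A_def B_def J_def by auto
  have Q_sum: "pmf Q y = (\<Sum>x\<in>A. pmf J (x, y))" for y
  proof -
    have "Q = map_pmf snd J" by (simp add: Q_def J_def map_pmf_comp)
    then show ?thesis using pmf_map_snd_eq_sum[OF finA J_sub] by simp
  qed
  have fiber: "pmf Q y * entropy (map_pmf X (cond_pmf p {z. Y z = y}))
      = - (\<Sum>x\<in>A. pmf J (x, y) * log 2 (pmf J (x, y))) + pmf Q y * log 2 (pmf Q y)"
    if y: "y \<in> B" for y
  proof -
    have Q_pos: "pmf Q y > 0" using y unfolding Q_def B_def by (auto intro: pmf_positive)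
    have "set_pmf p \<inter> {z. Y z = y} \<noteq> {}" using y unfolding B_def by auto
    then have "set_pmf (map_pmf X (cond_pmf p {z. Y z = y})) \<subseteq> A"
      unfolding A_def by auto
    then have "entropy (map_pmf X (cond_pmf p {z. Y z = y}))
        = - (\<Sum>x\<in>A. pmf J (x, y) / pmf Q y * log 2 (pmf J (x, y) / pmf Q y))"
      using y unfolding B_def J_def Q_def
      by (simp add: entropy_eq_sum_superset[OF finA] pmf_map_cond_pmf[OF fin])
    then have "pmf Q y * entropy (map_pmf X (cond_pmf p {z. Y z = y}))
        = - (\<Sum>x\<in>A. pmf Q y * (pmf J (x, y) / pmf Q y * log 2 (pmf J (x, y) / pmf Q y)))"
      by (simp add: sum_distrib_left)
    also have "\<dots> = - (\<Sum>x\<in>A. pmf J (x, y) * log 2 (pmf J (x, y)) - pmf J (x, y) * log 2 (pmf Q y))"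
      using Q_pos pmf_nonneg[of J]
      by (intro arg_cong[where f=uminus] sum.cong refl, case_tac "pmf J (x, y) = 0")
         (auto simp: log_divide right_diff_distrib)
    also have "\<dots> = - (\<Sum>x\<in>A. pmf J (x, y) * log 2 (pmf J (x, y))) + pmf Q y * log 2 (pmf Q y)"
      by (simp add: sum_subtractf sum_distrib_right Q_sum)
    finally show ?thesis .
  qed
  have "cond_entropy p X Y = (\<Sum>y\<in>B. pmf Q y * entropy (map_pmf X (cond_pmf p {z. Y z = y})))"
    unfolding cond_entropy_def B_def Q_def ..
  also have "\<dots> = - (\<Sum>y\<in>B. \<Sum>x\<in>A. pmf J (x, y) * log 2 (pmf J (x, y)))
      + (\<Sum>y\<in>B. pmf Q y * log 2 (pmf Q y))"
    by (simp add: fiber sum_subtractf)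
  also have "(\<Sum>y\<in>B. \<Sum>x\<in>A. pmf J (x, y) * log 2 (pmf J (x, y))) = - entropy J"
    using entropy_eq_sum_superset[OF finAB J_sub]
    by (subst sum.swap) (simp add: sum.cartesian_product split_beta)
  also have "(\<Sum>y\<in>B. pmf Q y * log 2 (pmf Q y)) = - entropy Q"
    by (simp add: entropy_def Q_def B_def)
  finally show ?thesis unfolding J_def Q_def by simp
qed

definition joint_entropy :: "nat set \<Rightarrow> (nat \<Rightarrow> 'a) pmf \<Rightarrow> real" where
  "joint_entropy S \<mu> = entropy (map_pmf (\<lambda>x. restrict x S) \<mu>)"

lemma TC_eq: "TC S \<mu> = (\<Sum>i\<in>S. entropy (map_pmf (\<lambda>x. x i) \<mu>)) - joint_entropy S \<mu>"
  unfolding TC_def joint_entropy_def ..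

lemma joint_entropy_empty: "joint_entropy {} \<mu> = 0"
  by (simp add: joint_entropy_def entropy_def map_pmf_const[symmetric] restrict_def)

lemma inj_on_coordinate_and_rest:
  assumes "i \<in> S"
  shows "inj_on (\<lambda>z. (z i, restrict z (S - {i}))) (extensional S)"
proof (rule inj_onI)
  fix z w assume z: "z \<in> extensional S" and w: "w \<in> extensional S"
    and eq: "(z i, restrict z (S - {i})) = (w i, restrict w (S - {i}))"
  have "z j = w j" if "j \<in> S" for j
  proof (cases "j = i")
    case False
    then have "restrict z (S - {i}) j = restrict w (S - {i}) j" using eq by simp
    then show ?thesis using False that by simp
  qed (use eq in simp)
  then show "z = w" using z w by (rule extensionalityI[rotated 2]) simp
qed

lemma entropy_coordinate_and_rest:
  assumes "i \<in> S"
  shows "entropy (map_pmf (\<lambda>x. (x i, restrict x (S - {i}))) \<mu>) = joint_entropy S \<mu>"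
proof -
  have "map_pmf (\<lambda>x. (x i, restrict x (S - {i}))) \<mu>
      = map_pmf (\<lambda>z. (z i, restrict z (S - {i}))) (map_pmf (\<lambda>x. restrict x S) \<mu>)"
    using assms by (simp add: map_pmf_comp restrict_restrict Int_absorb1 Diff_subset)
  also have "entropy \<dots> = joint_entropy S \<mu>"
    unfolding joint_entropy_def
    by (rule entropy_map_pmf_inj, rule inj_on_subset[OF inj_on_coordinate_and_rest[OF assms]]) auto
  finally show ?thesis .
qed

lemma joint_entropy_le_remove:
  assumes "finite (set_pmf \<mu>)" and "i \<in> S"
  shows "joint_entropy S \<mu> \<le> entropy (map_pmf (\<lambda>x. x i) \<mu>) + joint_entropy (S - {i}) \<mu>"
  using entropy_le_entropy_fst_plus_snd[of "map_pmf (\<lambda>x. (x i, restrict x (S - {i}))) \<mu>"] assms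
  by (simp add: entropy_coordinate_and_rest map_pmf_comp joint_entropy_def)

lemma cond_entropy_marginal_coordinate:
  assumes "finite (set_pmf \<mu>)" and "i \<in> S"
  shows "cond_entropy (marginal S \<mu>) (\<lambda>x. x i) (\<lambda>x. restrict x (S - {i}))
       = joint_entropy S \<mu> - joint_entropy (S - {i}) \<mu>"
  using assms cond_entropy_chain_rule[of "marginal S \<mu>" "\<lambda>x. x i" "\<lambda>x. restrict x (S - {i})"]
  by (simp add: marginal_def map_pmf_comp restrict_restrict Int_absorb1 Diff_subset
      entropy_coordinate_and_rest joint_entropy_def)

lemma TC_diff_remove:
  assumes "finite S" and "i \<in> S"
  shows "TC S \<mu> - TC (S - {i}) \<mu>
       = entropy (map_pmf (\<lambda>x. x i) \<mu>) - joint_entropy S \<mu> + joint_entropy (S - {i}) \<mu>"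
  unfolding TC_eq using sum.remove[OF assms, of "\<lambda>i. entropy (map_pmf (\<lambda>x. x i) \<mu>)"] by simp

lemma TC_nonneg:
  assumes "finite (set_pmf \<mu>)" and "finite S"
  shows "TC S \<mu> \<ge> 0"
  using assms(2)
proof (induction S rule: finite_induct)
  case empty
  then show ?case by (simp add: TC_eq joint_entropy_empty)
next
  case (insert i S)
  then have "TC (insert i S) \<mu> - TC S \<mu>
      = entropy (map_pmf (\<lambda>x. x i) \<mu>) - joint_entropy (insert i S) \<mu> + joint_entropy S \<mu>"
    using TC_diff_remove[of "insert i S" i \<mu>] by simp
  moreover have "joint_entropy (insert i S) \<mu> \<le> entropy (map_pmf (\<lambda>x. x i) \<mu>) + joint_entropy S \<mu>"
    using joint_entropy_le_remove[OF assms(1), of i "insert i S"] insert by simp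
  ultimately show ?case using insert by simp
qed

lemma sum_TC_diff_remove_eq:
  assumes "finite (set_pmf \<mu>)" and "finite S"
  shows "(\<Sum>i\<in>S. TC S \<mu> - TC (S - {i}) \<mu>) = DTC S (marginal S \<mu>) + TC S \<mu>"
proof -
  have "DTC S (marginal S \<mu>)
      = joint_entropy S \<mu> - (\<Sum>i\<in>S. joint_entropy S \<mu> - joint_entropy (S - {i}) \<mu>)"
    unfolding DTC_def using assms(1)
    by (simp add: cond_entropy_marginal_coordinate)
       (simp add: marginal_def map_pmf_comp joint_entropy_def)
  moreover have "(\<Sum>i\<in>S. TC S \<mu> - TC (S - {i}) \<mu>) = (\<Sum>i\<in>S.
      entropy (map_pmf (\<lambda>x. x i) \<mu>) - joint_entropy S \<mu> + joint_entropy (S - {i}) \<mu>)"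
    using assms(2) by (intro sum.cong) (simp_all add: TC_diff_remove)
  ultimately show ?thesis by (simp add: TC_eq sum.distrib sum_subtractf)
qed

lemma exists_subset_bounded_decrements:
  fixes T :: "'b set \<Rightarrow> real"
  assumes "finite U"
  shows "\<exists>S\<subseteq>U. (\<forall>i\<in>S. T S - T (S - {i}) \<le> c) \<and> real (card (U - S)) * c \<le> T U - T S"
  using assms
proof (induction U rule: finite_psubset_induct)
  case (psubset U)
  show ?case
  proof (cases "\<forall>i\<in>U. T U - T (U - {i}) \<le> c")
    case True
    then show ?thesis by auto
  next
    case False
    then obtain i where i: "i \<in> U" "T U - T (U - {i}) > c" by force
    then obtain S where S: "S \<subseteq> U - {i}" "\<forall>j\<in>S. T S - T (S - {j}) \<le> c"
      "real (card (U - {i} - S)) * c \<le> T (U - {i}) - T S"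
      using psubset.IH[of "U - {i}"] by blast
    have "U - S = insert i (U - {i} - S)" using S(1) i(1) by auto
    then have "card (U - S) = Suc (card (U - {i} - S))" using psubset.hyps by simp
    then have "real (card (U - S)) * c \<le> T U - T S" using S(3) i(2) by (simp add: algebra_simps)
    then show ?thesis using S(1,2) by auto
  qed
qed

lemma exists_large_subset_small_decrements:
  fixes T :: "'b set \<Rightarrow> real"
  assumes "finite U" and "r > 0" and nonneg: "\<And>S. S \<subseteq> U \<Longrightarrow> T S \<ge> 0"
  shows "\<exists>S\<subseteq>U. real (card S) \<ge> (1 - r) * real (card U) \<and>
           (\<Sum>i\<in>S. T S - T (S - {i})) \<le> T U / r"
proof (cases "U = {} \<or> T U = 0")
  case True
  then have "(\<Sum>i\<in>U. T U - T (U - {i})) \<le> T U / r"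
    using nonneg[of U] nonneg[of "U - {_}"] \<open>r > 0\<close> by (auto intro!: sum_nonpos)
  then show ?thesis using \<open>r > 0\<close> by (intro exI[of _ U]) (simp add: mult_le_cancel_right2)
next
  case False
  define n where "n = card U"
  define c where "c = T U / (r * n)"
  have "n > 0" using False \<open>finite U\<close> by (simp add: n_def card_gt_0_iff)
  moreover have "T U > 0" using False nonneg[of U] by simp
  ultimately have "c > 0" using \<open>r > 0\<close> by (simp add: c_def)
  obtain S where S: "S \<subseteq> U" "\<forall>i\<in>S. T S - T (S - {i}) \<le> c"
      "real (card (U - S)) * c \<le> T U - T S"
    using exists_subset_bounded_decrements[OF \<open>finite U\<close>] by blast
  have card_S: "card S \<le> n" "card (U - S) = n - card S"
    using S(1) \<open>finite U\<close> by (simp_all add: n_def card_mono card_Diff_subset finite_subset)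
  have "real (card (U - S)) * c \<le> r * n * c"
    using S(3) nonneg[OF S(1)] \<open>n > 0\<close> \<open>r > 0\<close> by (simp add: c_def)
  then have "real (card (U - S)) \<le> r * n"
    using \<open>c > 0\<close> by (simp add: mult_le_cancel_right_pos)
  then have "real (card S) \<ge> (1 - r) * n"
    using card_S by (simp add: of_nat_diff algebra_simps)
  moreover have "(\<Sum>i\<in>S. T S - T (S - {i})) \<le> n * c"
  proof -
    have "(\<Sum>i\<in>S. T S - T (S - {i})) \<le> card S * c" using S(2) sum_mono[of S _ "\<lambda>_. c"] by simp
    also have "\<dots> \<le> n * c" using card_S(1) \<open>c > 0\<close> by simp
    finally show ?thesis .
  qed
  moreover have "n * c = T U / r" using \<open>n > 0\<close> by (simp add: c_def)
  ultimately show ?thesis using S(1) unfolding n_def by auto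
qed

theorem lemma3p7:
  fixes A :: "'a set" and n :: nat and \<mu> :: "(nat \<Rightarrow> 'a) pmf" and r :: real
  assumes "finite A"
    and "set_pmf \<mu> \<subseteq> PiE {1..n} (\<lambda>_. A)"
    and "r > 0"
  shows "\<exists>S. S \<subseteq> {1..n} \<and> real (card S) \<ge> (1 - r) * real n \<and>
             DTC S (marginal S \<mu>) \<le> TC {1..n} \<mu> / r"
proof -
  have fin: "finite (set_pmf \<mu>)"
    by (rule finite_subset[OF assms(2)]) (simp add: finite_PiE assms(1))
  have "\<exists>S\<subseteq>{1..n}. real (card S) \<ge> (1 - r) * real (card {1..n}) \<and>
      (\<Sum>i\<in>S. TC S \<mu> - TC (S - {i}) \<mu>) \<le> TC {1..n} \<mu> / r"
    by (rule exists_large_subset_small_decrements)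
       (use assms(3) TC_nonneg[OF fin] finite_subset in auto)
  then obtain S where S: "S \<subseteq> {1..n}" "real (card S) \<ge> (1 - r) * real n"
      and decrements: "(\<Sum>i\<in>S. TC S \<mu> - TC (S - {i}) \<mu>) \<le> TC {1..n} \<mu> / r"
    by auto
  have "finite S" using S(1) finite_subset by blast
  then have "DTC S (marginal S \<mu>) \<le> (\<Sum>i\<in>S. TC S \<mu> - TC (S - {i}) \<mu>)"
    using sum_TC_diff_remove_eq[OF fin] TC_nonneg[OF fin] by simp
  then show ?thesis using S decrements by auto
qed

end
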